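(* If $A,B,C,X$ are $N\times N$ real symmetric positive semidefinite matrices, then \[ \det(A+X)+\det(B+X)+\det(C+X)+\det(A+B+C+X)\geq\det(A+B+X)+\det(B+C+X)+\det(C+A+X)+\det X. \] *)

theory Defs
  imports "HOL-Analysis.Analysis"
begin

definition psd_matrix :: "real ^ 'n ^ 'n \<Rightarrow> bool" where
  "psd_matrix A \<longleftrightarrow> transpose A = A \<and> (\<forall>x :: real ^ 'n. 0 \<le> x \<bullet> (A *v x))"

end

theory Submission
  imports Defs
begin

(* Every positive semidefinite matrix is a finite sum of rank-one matrices v v^T (pivoted
   Cholesky via Schur complements), so it suffices to treat
   M S = (\<Sum>k\<in>S. u k u k^T) for one family u and disjoint index sets for A, B, C, X.
   Multilinearity expands det (M S) as a sum over all maps g from rows to S, and over any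
   set of maps closed under g \<mapsto> g \<circ> p (p a permutation) these terms add up to a
   nonnegative number: averaging over the orbit gives det (u (g i))_i squared. By
   inclusion-exclusion, the difference of the two sides of the inequality is exactly the
   sum over the maps g whose range meets each of the index sets of A, B and C, a
   permutation-closed set. *)

definition outer :: "real ^ 'n \<Rightarrow> real ^ 'n ^ 'n" where
  "outer v = (\<chi> i j. v $ i * v $ j)"

lemma outer_mult_vector: "outer c *v x = (c \<bullet> x) *\<^sub>R c"
  by (simp add: outer_def vec_eq_iff matrix_vector_mult_def inner_vec_def sum_distrib_left algebra_simps)

lemma inner_outer_mult_vector: "x \<bullet> (outer c *v x) = (x \<bullet> c)\<^sup>2"
  by (simp add: outer_mult_vector power2_eq_square inner_commute)

lemma outer_scaleR: "outer (r *\<^sub>R c) = r\<^sup>2 *\<^sub>R outer c"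
  by (simp add: outer_def vec_eq_iff power2_eq_square)

lemma nonneg_quadratic_imp_discrim_le:
  fixes a b c :: real
  assumes nonneg: "\<And>t. 0 \<le> a * t\<^sup>2 + 2 * b * t + c" and "0 \<le> a"
  shows "b\<^sup>2 \<le> a * c"
proof (cases "a = 0")
  case True
  have "b = 0"
  proof (rule ccontr)
    assume "b \<noteq> 0"
    have "0 \<le> a * (- (c + 1) / (2 * b))\<^sup>2 + 2 * b * (- (c + 1) / (2 * b)) + c" by (rule nonneg)
    also have "\<dots> = -1" using True \<open>b \<noteq> 0\<close> by (simp add: field_simps)
    finally show False by simp
  qed
  with True show ?thesis by simp
next
  case False
  with \<open>0 \<le> a\<close> have "0 < a" by simp
  have "0 \<le> a * (- b / a)\<^sup>2 + 2 * b * (- b / a) + c" by (rule nonneg)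
  also have "\<dots> = c - b\<^sup>2 / a" using \<open>0 < a\<close> by (simp add: field_simps power2_eq_square)
  finally show ?thesis using \<open>0 < a\<close> by (simp add: field_simps)
qed

lemma inner_axis_mult_axis: "axis i 1 \<bullet> (A *v axis j 1) = (A :: real ^ 'n ^ 'm) $ i $ j"
  by (simp add: matrix_vector_mult_basis inner_axis' column_def)

lemma symmetric_matrix_inner_commute:
  fixes A :: "real ^ 'n ^ 'n"
  assumes "transpose A = A"
  shows "x \<bullet> (A *v y) = y \<bullet> (A *v x)"
proof -
  have "x \<bullet> (A *v y) = (x v* A) \<bullet> y" by (rule dot_lmul_matrix[symmetric])
  also have "x v* A = A *v x" by (metis assms transpose_matrix_vector)
  finally show ?thesis by (simp add: inner_commute)
qed

lemma psd_matrix_diag_nonneg: "psd_matrix A \<Longrightarrow> 0 \<le> A $ i $ i"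
  unfolding psd_matrix_def by (metis inner_axis_mult_axis)

lemma psd_matrix_cauchy_schwarz:
  assumes A: "psd_matrix A"
  shows "(x \<bullet> (A *v y))\<^sup>2 \<le> (y \<bullet> (A *v y)) * (x \<bullet> (A *v x))"
proof (rule nonneg_quadratic_imp_discrim_le)
  have commute: "y \<bullet> (A *v x) = x \<bullet> (A *v y)"
    using A symmetric_matrix_inner_commute unfolding psd_matrix_def by metis
  fix t
  have "0 \<le> (x + t *\<^sub>R y) \<bullet> (A *v (x + t *\<^sub>R y))"
    using A unfolding psd_matrix_def by blast
  also have "\<dots> = (y \<bullet> (A *v y)) * t\<^sup>2 + 2 * (x \<bullet> (A *v y)) * t + x \<bullet> (A *v x)"
    by (simp add: algebra_simps commute power2_eq_square)
  finally show "0 \<le> (y \<bullet> (A *v y)) * t\<^sup>2 + 2 * (x \<bullet> (A *v y)) * t + x \<bullet> (A *v x)" .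
  show "0 \<le> y \<bullet> (A *v y)" using A unfolding psd_matrix_def by blast
qed

lemma psd_matrix_zero_diag:
  assumes A: "psd_matrix A" and "A $ j $ j = 0"
  shows "A $ i $ j = 0" and "A $ j $ i = 0"
proof -
  have "(axis i 1 \<bullet> (A *v axis j 1))\<^sup>2 \<le> (axis j 1 \<bullet> (A *v axis j 1)) * (axis i 1 \<bullet> (A *v axis i 1))"
    using psd_matrix_cauchy_schwarz[OF A] .
  then show "A $ i $ j = 0" using \<open>A $ j $ j = 0\<close> by (simp add: inner_axis_mult_axis)
  moreover have "A $ j $ i = transpose A $ i $ j" by (simp add: transpose_def)
  ultimately show "A $ j $ i = 0" using A unfolding psd_matrix_def by simp
qed

definition schur_complement :: "real ^ 'n ^ 'n \<Rightarrow> 'n \<Rightarrow> real ^ 'n ^ 'n" where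
  "schur_complement A i = A - (1 / A $ i $ i) *\<^sub>R outer (A *v axis i 1)"

lemma schur_complement_diag:
  "schur_complement A i $ j $ j = A $ j $ j - (A $ j $ i)\<^sup>2 / A $ i $ i"
  by (simp add: schur_complement_def outer_def matrix_vector_mult_basis column_def power2_eq_square)

lemma psd_matrix_schur_complement:
  assumes A: "psd_matrix A" and "0 < A $ i $ i"
  shows "psd_matrix (schur_complement A i)"
proof -
  let ?c = "A *v axis i 1"
  have "0 \<le> x \<bullet> (schur_complement A i *v x)" for x
  proof -
    have "(x \<bullet> ?c)\<^sup>2 \<le> A $ i $ i * (x \<bullet> (A *v x))"
      using psd_matrix_cauchy_schwarz[OF A, of x "axis i 1"] by (simp add: inner_axis_mult_axis)
    then have "0 \<le> x \<bullet> (A *v x) - (x \<bullet> ?c)\<^sup>2 / A $ i $ i"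
      using \<open>0 < A $ i $ i\<close> by (simp add: field_simps)
    then show ?thesis
      by (simp add: schur_complement_def matrix_vector_mult_diff_rdistrib inner_diff_right
          inner_outer_mult_vector scaleR_matrix_vector_assoc[symmetric])
  qed
  moreover have "transpose (schur_complement A i) = schur_complement A i"
    using A unfolding psd_matrix_def schur_complement_def
    by (simp add: vec_eq_iff transpose_def outer_def mult.commute)
  ultimately show ?thesis unfolding psd_matrix_def by blast
qed

lemma psd_matrix_schur_complement_diag_support:
  assumes A: "psd_matrix A" and "0 < A $ i $ i"
  shows "{j. schur_complement A i $ j $ j \<noteq> 0} \<subset> {j. A $ j $ j \<noteq> 0}"
proof -
  have "{j. schur_complement A i $ j $ j \<noteq> 0} \<subseteq> {j. A $ j $ j \<noteq> 0} - {i}"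
    using \<open>0 < A $ i $ i\<close> psd_matrix_zero_diag(2)[OF A]
    by (auto simp: schur_complement_diag power2_eq_square)
  then show ?thesis using \<open>0 < A $ i $ i\<close> by auto
qed

lemma schur_complement_decompose:
  assumes "0 < A $ i $ i"
  shows "A = schur_complement A i + outer ((1 / sqrt (A $ i $ i)) *\<^sub>R (A *v axis i 1))"
  using assms by (simp add: schur_complement_def outer_scaleR power_divide)

lemma psd_matrix_sum_outer:
  "psd_matrix A \<Longrightarrow> \<exists>u (m :: nat). A = (\<Sum>k<m. outer (u k))"
proof (induction "card {j. A $ j $ j \<noteq> 0}" arbitrary: A rule: less_induct)
  case less
  show ?case
  proof (cases "\<exists>i. A $ i $ i \<noteq> 0")
    case False
    then have "A = 0" using psd_matrix_zero_diag(1)[OF less.prems] by (auto simp: vec_eq_iff)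
    then have "A = (\<Sum>k<(0 :: nat). outer (u k))" for u by simp
    then show ?thesis by blast
  next
    case True
    then obtain i where "0 < A $ i $ i"
      using psd_matrix_diag_nonneg[OF less.prems] by (metis less_eq_real_def)
    let ?v = "(1 / sqrt (A $ i $ i)) *\<^sub>R (A *v axis i 1)"
    have "card {j. schur_complement A i $ j $ j \<noteq> 0} < card {j. A $ j $ j \<noteq> 0}"
      using psd_matrix_schur_complement_diag_support[OF less.prems \<open>0 < A $ i $ i\<close>]
      by (simp add: psubset_card_mono)
    then obtain u and m :: nat where "schur_complement A i = (\<Sum>k<m. outer (u k))"
      using less.hyps psd_matrix_schur_complement[OF less.prems \<open>0 < A $ i $ i\<close>] by blast
    then have "A = (\<Sum>k<Suc m. outer ((u(m := ?v)) k))"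
      using schur_complement_decompose[OF \<open>0 < A $ i $ i\<close>] by simp
    then show ?thesis by blast
  qed
qed

definition det_outer_term :: "('k \<Rightarrow> real ^ 'n) \<Rightarrow> ('n \<Rightarrow> 'k) \<Rightarrow> real" where
  "det_outer_term u g = (\<Prod>i\<in>UNIV. u (g i) $ i) * det (\<chi> i. u (g i))"

lemma det_sum_outer:
  fixes u :: "'k \<Rightarrow> real ^ 'n"
  assumes "finite K"
  shows "det (\<Sum>k\<in>K. outer (u k)) = (\<Sum>g\<in>UNIV \<rightarrow>\<^sub>E K. det_outer_term u g)"
proof -
  let ?P = "{p. p permutes (UNIV :: 'n set)}"
  have "det (\<Sum>k\<in>K. outer (u k))
      = (\<Sum>p\<in>?P. of_int (sign p) * (\<Prod>i\<in>UNIV. \<Sum>k\<in>K. u k $ i * u k $ p i))"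
    by (simp add: det_def outer_def sum_component)
  also have "\<dots> = (\<Sum>p\<in>?P. of_int (sign p) *
      (\<Sum>g\<in>UNIV \<rightarrow>\<^sub>E K. (\<Prod>i\<in>UNIV. u (g i) $ i) * (\<Prod>i\<in>UNIV. u (g i) $ p i)))"
    using assms by (simp add: prod_sum_PiE prod.distrib)
  also have "\<dots> = (\<Sum>g\<in>UNIV \<rightarrow>\<^sub>E K. \<Sum>p\<in>?P.
      (\<Prod>i\<in>UNIV. u (g i) $ i) * (of_int (sign p) * (\<Prod>i\<in>UNIV. u (g i) $ p i)))"
    by (subst sum.swap) (simp add: sum_distrib_left mult.left_commute)
  also have "\<dots> = (\<Sum>g\<in>UNIV \<rightarrow>\<^sub>E K. det_outer_term u g)"
    by (simp add: det_outer_term_def det_def sum_distrib_left)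
  finally show ?thesis .
qed

lemma sum_permutes_det_outer_term:
  fixes u :: "'k \<Rightarrow> real ^ 'n"
  shows "(\<Sum>p | p permutes (UNIV :: 'n set). det_outer_term u (g \<circ> p)) = (det (\<chi> i. u (g i)))\<^sup>2"
proof -
  define V where "V = (\<chi> i. u (g i))"
  have "(\<Sum>p | p permutes UNIV. det_outer_term u (g \<circ> p))
      = (\<Sum>p | p permutes (UNIV :: 'n set). det V * (of_int (sign p) * (\<Prod>i\<in>UNIV. transpose V $ i $ p i)))"
  proof (rule sum.cong)
    fix p :: "'n \<Rightarrow> 'n" assume "p \<in> {p. p permutes UNIV}"
    then have "det (\<chi> i. V $ p i) = of_int (sign p) * det V" by (simp add: det_permute_rows)
    then show "det_outer_term u (g \<circ> p) = det V * (of_int (sign p) * (\<Prod>i\<in>UNIV. transpose V $ i $ p i))"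
      by (simp add: det_outer_term_def transpose_def V_def)
  qed simp
  also have "\<dots> = det V * det (transpose V)"
    by (simp only: det_def[of "transpose V"] sum_distrib_left)
  finally show ?thesis by (simp add: V_def power2_eq_square)
qed

lemma sum_det_outer_term_nonneg:
  fixes u :: "'k \<Rightarrow> real ^ 'n"
  assumes "finite G" and closed: "\<And>g p. g \<in> G \<Longrightarrow> p permutes (UNIV :: 'n set) \<Longrightarrow> g \<circ> p \<in> G"
  shows "0 \<le> (\<Sum>g\<in>G. det_outer_term u g)"
proof -
  let ?P = "{p. p permutes (UNIV :: 'n set)}"
  have reindex: "(\<Sum>g\<in>G. det_outer_term u (g \<circ> p)) = (\<Sum>g\<in>G. det_outer_term u g)"
    if p: "p permutes UNIV" for p
  proof (rule sum.reindex_bij_witness[where i = "\<lambda>g. g \<circ> inv p" and j = "\<lambda>g. g \<circ> p"])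
    show "g \<circ> inv p \<circ> p = g" "g \<circ> p \<circ> inv p = g" for g
      using permutes_inv_o[OF p] by (simp_all add: comp_assoc)
    show "g \<circ> inv p \<in> G" "g \<circ> p \<in> G" if "g \<in> G" for g
      using closed[OF that p] closed[OF that permutes_inv[OF p]] by auto
  qed simp
  have "real (card ?P) * (\<Sum>g\<in>G. det_outer_term u g) = (\<Sum>p\<in>?P. \<Sum>g\<in>G. det_outer_term u (g \<circ> p))"
    by (simp add: reindex)
  also have "\<dots> = (\<Sum>g\<in>G. (det (\<chi> i. u (g i)))\<^sup>2)"
    by (subst sum.swap) (simp add: sum_permutes_det_outer_term)
  finally have "0 \<le> real (card ?P) * (\<Sum>g\<in>G. det_outer_term u g)"
    by (simp add: sum_nonneg)
  moreover have "0 < card ?P"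
    using finite_permutations[OF finite_class.finite_UNIV] permutes_id card_gt_0_iff by blast
  ultimately show ?thesis by (metis of_nat_0_less_iff zero_le_mult_iff linorder_not_le)
qed

lemma third_difference_of_bool:
  fixes R :: "'k set"
  assumes "R \<subseteq> KA \<union> KB \<union> KC \<union> KX"
    and "KA \<inter> KB = {}" "KA \<inter> KC = {}" "KB \<inter> KC = {}"
    and "KA \<inter> KX = {}" "KB \<inter> KX = {}" "KC \<inter> KX = {}"
  shows "of_bool (R \<subseteq> KA \<union> KX) + of_bool (R \<subseteq> KB \<union> KX) + of_bool (R \<subseteq> KC \<union> KX)
           + of_bool (R \<subseteq> KA \<union> KB \<union> KC \<union> KX)
         - (of_bool (R \<subseteq> KA \<union> KB \<union> KX) + of_bool (R \<subseteq> KB \<union> KC \<union> KX)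
           + of_bool (R \<subseteq> KC \<union> KA \<union> KX) + of_bool (R \<subseteq> KX))
       = (of_bool (R \<inter> KA \<noteq> {} \<and> R \<inter> KB \<noteq> {} \<and> R \<inter> KC \<noteq> {}) :: 'a :: ring_1)"
proof -
  let ?K = "KA \<union> KB \<union> KC \<union> KX"
  have subset_iff: "R \<subseteq> S \<longleftrightarrow> R \<inter> (?K - S) = {}" for S
    using assms(1) by blast
  have "?K - (KA \<union> KX) = KB \<union> KC" "?K - (KB \<union> KX) = KA \<union> KC" "?K - (KC \<union> KX) = KA \<union> KB"
    "?K - ?K = {}" "?K - (KA \<union> KB \<union> KX) = KC" "?K - (KB \<union> KC \<union> KX) = KA"
    "?K - (KC \<union> KA \<union> KX) = KB" "?K - KX = KA \<union> KB \<union> KC"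
    using assms(2-) by blast+
  then show ?thesis
    unfolding subset_iff
    by (cases "R \<inter> KA = {}"; cases "R \<inter> KB = {}"; cases "R \<inter> KC = {}") (simp_all add: Int_Un_distrib)
qed

lemma sum_funcset_third_difference:
  fixes f :: "('n :: finite \<Rightarrow> 'k) \<Rightarrow> 'a :: comm_ring_1"
  assumes "finite KA" "finite KB" "finite KC" "finite KX"
    and "KA \<inter> KB = {}" "KA \<inter> KC = {}" "KB \<inter> KC = {}"
    and "KA \<inter> KX = {}" "KB \<inter> KX = {}" "KC \<inter> KX = {}"
  defines "F S \<equiv> \<Sum>g\<in>UNIV \<rightarrow>\<^sub>E S. f g"
  shows "F (KA \<union> KX) + F (KB \<union> KX) + F (KC \<union> KX) + F (KA \<union> KB \<union> KC \<union> KX)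
         - (F (KA \<union> KB \<union> KX) + F (KB \<union> KC \<union> KX) + F (KC \<union> KA \<union> KX) + F KX)
       = (\<Sum>g | g \<in> UNIV \<rightarrow>\<^sub>E KA \<union> KB \<union> KC \<union> KX
               \<and> range g \<inter> KA \<noteq> {} \<and> range g \<inter> KB \<noteq> {} \<and> range g \<inter> KC \<noteq> {}. f g)"
proof -
  let ?K = "KA \<union> KB \<union> KC \<union> KX"
  let ?I = "\<lambda>g S. of_bool (range g \<subseteq> S) :: 'a"
  have finite_funcset: "finite ((UNIV :: 'n set) \<rightarrow>\<^sub>E ?K)"
    using assms(1-4) by (intro finite_PiE) auto
  have F_eq: "F S = (\<Sum>g\<in>UNIV \<rightarrow>\<^sub>E ?K. ?I g S * f g)" if "S \<subseteq> ?K" for S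
  proof -
    have "(UNIV :: 'n set) \<rightarrow>\<^sub>E S = (UNIV \<rightarrow>\<^sub>E ?K) \<inter> {g. range g \<subseteq> S}"
      using that by auto
    then show ?thesis
      by (simp add: F_def finite_funcset)
  qed
  have "F (KA \<union> KX) + F (KB \<union> KX) + F (KC \<union> KX) + F ?K
         - (F (KA \<union> KB \<union> KX) + F (KB \<union> KC \<union> KX) + F (KC \<union> KA \<union> KX) + F KX)
      = (\<Sum>g\<in>UNIV \<rightarrow>\<^sub>E ?K. (?I g (KA \<union> KX) + ?I g (KB \<union> KX) + ?I g (KC \<union> KX) + ?I g ?K
           - (?I g (KA \<union> KB \<union> KX) + ?I g (KB \<union> KC \<union> KX) + ?I g (KC \<union> KA \<union> KX) + ?I g KX)) * f g)"
  proof -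
    have "KA \<union> KX \<subseteq> ?K" "KB \<union> KX \<subseteq> ?K" "KC \<union> KX \<subseteq> ?K" "?K \<subseteq> ?K" "KA \<union> KB \<union> KX \<subseteq> ?K"
      "KB \<union> KC \<union> KX \<subseteq> ?K" "KC \<union> KA \<union> KX \<subseteq> ?K" "KX \<subseteq> ?K"
      by blast+
    then show ?thesis by (simp only: F_eq sum.distrib sum_subtractf ring_distribs)
  qed
  also have "\<dots> = (\<Sum>g\<in>UNIV \<rightarrow>\<^sub>E ?K.
      of_bool (range g \<inter> KA \<noteq> {} \<and> range g \<inter> KB \<noteq> {} \<and> range g \<inter> KC \<noteq> {}) * f g)"
    by (intro sum.cong refl arg_cong2[where f = times] third_difference_of_bool assms(5-)) auto
  also have "\<dots> = (\<Sum>g | g \<in> UNIV \<rightarrow>\<^sub>E ?K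
      \<and> range g \<inter> KA \<noteq> {} \<and> range g \<inter> KB \<noteq> {} \<and> range g \<inter> KC \<noteq> {}. f g)"
    by (simp add: finite_funcset Int_def)
  finally show ?thesis .
qed

lemma det_sum_outer_third_difference_nonneg:
  fixes u :: "'k \<Rightarrow> real ^ 'n"
  assumes "finite KA" "finite KB" "finite KC" "finite KX"
    and "KA \<inter> KB = {}" "KA \<inter> KC = {}" "KB \<inter> KC = {}"
    and "KA \<inter> KX = {}" "KB \<inter> KX = {}" "KC \<inter> KX = {}"
  defines "M S \<equiv> \<Sum>k\<in>S. outer (u k)"
  shows "det (M KA + M KB + M KX) + det (M KB + M KC + M KX) + det (M KC + M KA + M KX) + det (M KX)
       \<le> det (M KA + M KX) + det (M KB + M KX) + det (M KC + M KX) + det (M KA + M KB + M KC + M KX)"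
proof -
  let ?G = "{g :: 'n \<Rightarrow> 'k. g \<in> UNIV \<rightarrow>\<^sub>E KA \<union> KB \<union> KC \<union> KX
               \<and> range g \<inter> KA \<noteq> {} \<and> range g \<inter> KB \<noteq> {} \<and> range g \<inter> KC \<noteq> {}}"
  have M_union: "M KA + M KX = M (KA \<union> KX)" "M KB + M KX = M (KB \<union> KX)" "M KC + M KX = M (KC \<union> KX)"
    "M KA + M KB + M KC + M KX = M (KA \<union> KB \<union> KC \<union> KX)" "M KA + M KB + M KX = M (KA \<union> KB \<union> KX)"
    "M KB + M KC + M KX = M (KB \<union> KC \<union> KX)" "M KC + M KA + M KX = M (KC \<union> KA \<union> KX)"
    using assms(1-10) Int_commute[of KC KA] by (simp_all add: M_def sum.union_disjoint Int_Un_distrib2)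
  have det_M: "det (M S) = (\<Sum>g\<in>UNIV \<rightarrow>\<^sub>E S. det_outer_term u g)" if "finite S" for S
    unfolding M_def using det_sum_outer[OF that] .
  have "0 \<le> (\<Sum>g\<in>?G. det_outer_term u g)"
  proof (rule sum_det_outer_term_nonneg)
    have "finite ((UNIV :: 'n set) \<rightarrow>\<^sub>E KA \<union> KB \<union> KC \<union> KX)"
      using assms(1-4) by (intro finite_PiE) auto
    then show "finite ?G" by (rule rev_finite_subset) auto
    show "g \<circ> p \<in> ?G" if "g \<in> ?G" and "p permutes UNIV" for g p
    proof -
      have "range (g \<circ> p) = range g"
        using permutes_surj[OF \<open>p permutes UNIV\<close>] by (metis image_comp)
      with \<open>g \<in> ?G\<close> show ?thesis by (auto simp: PiE_iff)
    qed
  qed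
  also have "\<dots> = det (M KA + M KX) + det (M KB + M KX) + det (M KC + M KX) + det (M KA + M KB + M KC + M KX)
      - (det (M KA + M KB + M KX) + det (M KB + M KC + M KX) + det (M KC + M KA + M KX) + det (M KX))"
    using sum_funcset_third_difference[OF assms(1-10), of "det_outer_term u"] assms(1-4)
    by (simp add: M_union det_M)
  finally show ?thesis by simp
qed

theorem lemma5p5:
  fixes A B C X :: "real ^ 'n ^ 'n"
  assumes "psd_matrix A" and "psd_matrix B" and "psd_matrix C" and "psd_matrix X"
  shows "det (A + X) + det (B + X) + det (C + X) + det (A + B + C + X)
           \<ge> det (A + B + X) + det (B + C + X) + det (C + A + X) + det X"
proof -
  obtain uA and mA :: nat where A: "A = (\<Sum>k<mA. outer (uA k))"
    using psd_matrix_sum_outer[OF assms(1)] by blast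
  obtain uB and mB :: nat where B: "B = (\<Sum>k<mB. outer (uB k))"
    using psd_matrix_sum_outer[OF assms(2)] by blast
  obtain uC and mC :: nat where C: "C = (\<Sum>k<mC. outer (uC k))"
    using psd_matrix_sum_outer[OF assms(3)] by blast
  obtain uX and mX :: nat where X: "X = (\<Sum>k<mX. outer (uX k))"
    using psd_matrix_sum_outer[OF assms(4)] by blast
  define u where "u = (\<lambda>(t, k). ([uA, uB, uC, uX] ! t) k)"
  have tagged: "(\<Sum>k\<in>{t} \<times> {..<m}. outer (u k)) = (\<Sum>k<m. outer (([uA, uB, uC, uX] ! t) k))"
    for t m
  proof -
    have "{t} \<times> {..<m} = Pair t ` {..<m}" by auto
    then show ?thesis by (simp add: u_def sum.reindex inj_on_def)
  qed
  show ?thesis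
    using det_sum_outer_third_difference_nonneg[where u = u and KA = "{0} \<times> {..<mA}"
        and KB = "{1} \<times> {..<mB}" and KC = "{2} \<times> {..<mC}" and KX = "{3} \<times> {..<mX}"]
    by (simp add: tagged A B C X Times_Int_Times)
qed

end
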